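(* For every $n>3$, the only graph with $n$ vertices that is minor minimal with respect to spherical dimension $n-1$ is $K_{n-3}+\epsilon_3$; that is, $\mathbb{S}_n=\{K_{n-3}+\epsilon_3\}$.
   Context: All graphs are finite and simple; $\epsilon_3$ is the graph with three vertices and no edges, and $G+H$ is obtained from disjoint copies of $G$ and $H$ by adding all edges between them. A minor of $G$ is a graph obtained by a sequence of vertex deletions, edge deletions and edge contractions (discarding loops and multiple edges). A unit-distance embedding of $G$ in $\mathbb{R}^n$ is an injective map $f$ from the vertex set to $\mathbb{R}^n$ with $|f(u)-f(v)|=1$ for every edge $uv$ and no $f(w)$ on the segment $[f(u),f(v)]$ for an edge $uv$ with $w\notin\{u,v\}$. $G$ admits a spherical embedding of dimension $k$ and radius $r$ if $G$ has a unit-distance embedding in $\mathbb{R}^k$ all of whose vertices lie on a sphere $\{x\in\mathbb{R}^k:|x-c|=r\}$. $\operatorname{sdim}G$ is the least $k$ such that $G$ admits a spherical embedding of dimension $k$ and some radius $r<1$. $G$ is minor minimal with respect to spherical dimension $d$ if $\operatorname{sdim}G=d$ and every proper minor of $G$ has spherical dimension less than $d$. $\mathbb{S}_n$ denotes the set of $n$-vertex graphs that are minor minimal with respect to spherical dimension $n-1$. *)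

theory Defs
  imports Complex_Main
begin

definition simple_graph :: "'a set \<Rightarrow> 'a set set \<Rightarrow> bool" where
  "simple_graph V E \<longleftrightarrow> finite V \<and>
     (\<forall>e\<in>E. \<exists>u v. e = {u, v} \<and> u \<noteq> v \<and> u \<in> V \<and> v \<in> V)"

definition graph_iso :: "'a set \<Rightarrow> 'a set set \<Rightarrow> 'b set \<Rightarrow> 'b set set \<Rightarrow> bool" where
  "graph_iso V E V' E' \<longleftrightarrow> (\<exists>\<phi>. bij_betw \<phi> V V' \<and>
     (\<forall>u\<in>V. \<forall>v\<in>V. {u, v} \<in> E \<longleftrightarrow> {\<phi> u, \<phi> v} \<in> E'))"

text \<open>The graph \<open>K_{n-3} + \<epsilon>_3\<close> on vertex set {0..<n}: vertices n-3, n-2, n-1 form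
the independent set \<open>\<epsilon>_3\<close>, all other pairs of distinct vertices are adjacent.\<close>

definition K_plus_eps3_V :: "nat \<Rightarrow> nat set" where
  "K_plus_eps3_V n = {0..<n}"

definition K_plus_eps3_E :: "nat \<Rightarrow> nat set set" where
  "K_plus_eps3_E n = {{i, j} | i j. i < n \<and> j < n \<and> i \<noteq> j \<and> (i < n - 3 \<or> j < n - 3)}"

definition delete_vertex :: "'a \<Rightarrow> 'a set \<times> 'a set set \<Rightarrow> 'a set \<times> 'a set set" where
  "delete_vertex v G = (fst G - {v}, {e \<in> snd G. v \<notin> e})"

definition delete_edge :: "'a set \<Rightarrow> 'a set \<times> 'a set set \<Rightarrow> 'a set \<times> 'a set set" where
  "delete_edge e G = (fst G, snd G - {e})"

text \<open>Contract the edge uv: v is merged into u (loops and multiple edges discarded).\<close>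
definition contract_edge :: "'a \<Rightarrow> 'a \<Rightarrow> 'a set \<times> 'a set set \<Rightarrow> 'a set \<times> 'a set set" where
  "contract_edge u v G = (fst G - {v},
     {e \<in> snd G. v \<notin> e} \<union> {{u, w} | w. {v, w} \<in> snd G \<and> w \<noteq> u})"

inductive minor_step :: "'a set \<times> 'a set set \<Rightarrow> 'a set \<times> 'a set set \<Rightarrow> bool" where
  del_v: "v \<in> fst G \<Longrightarrow> minor_step G (delete_vertex v G)"
| del_e: "e \<in> snd G \<Longrightarrow> minor_step G (delete_edge e G)"
| contr: "{u, v} \<in> snd G \<Longrightarrow> u \<noteq> v \<Longrightarrow> minor_step G (contract_edge u v G)"

definition proper_minor :: "'a set \<times> 'a set set \<Rightarrow> 'a set \<times> 'a set set \<Rightarrow> bool" where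
  "proper_minor H G \<longleftrightarrow> minor_step\<^sup>+\<^sup>+ G H"

text \<open>Points of R^k are represented as functions nat \<Rightarrow> real vanishing from index k on.\<close>

definition in_R :: "nat \<Rightarrow> (nat \<Rightarrow> real) \<Rightarrow> bool" where
  "in_R k x \<longleftrightarrow> (\<forall>i\<ge>k. x i = 0)"

definition distR :: "nat \<Rightarrow> (nat \<Rightarrow> real) \<Rightarrow> (nat \<Rightarrow> real) \<Rightarrow> real" where
  "distR k x y = sqrt (\<Sum>i<k. (x i - y i)\<^sup>2)"

definition unit_distance_embedding ::
    "'a set \<Rightarrow> 'a set set \<Rightarrow> nat \<Rightarrow> ('a \<Rightarrow> nat \<Rightarrow> real) \<Rightarrow> bool" where
  "unit_distance_embedding V E k f \<longleftrightarrow>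
     inj_on f V \<and> (\<forall>v\<in>V. in_R k (f v)) \<and>
     (\<forall>u v. {u, v} \<in> E \<longrightarrow> distR k (f u) (f v) = 1) \<and>
     (\<forall>u v w. {u, v} \<in> E \<longrightarrow> w \<in> V \<longrightarrow> w \<noteq> u \<longrightarrow> w \<noteq> v \<longrightarrow>
        \<not> (\<exists>t::real. 0 \<le> t \<and> t \<le> 1 \<and> f w = (\<lambda>i. (1 - t) * f u i + t * f v i)))"

definition spherical_embedding :: "'a set \<Rightarrow> 'a set set \<Rightarrow> nat \<Rightarrow> real \<Rightarrow> bool" where
  "spherical_embedding V E k r \<longleftrightarrow>
     (\<exists>f c. unit_distance_embedding V E k f \<and> in_R k c \<and>
        (\<forall>v\<in>V. distR k (f v) c = r))"

definition sdim :: "'a set \<Rightarrow> 'a set set \<Rightarrow> nat" where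
  "sdim V E = (LEAST k. \<exists>r<1. spherical_embedding V E k r)"

definition minor_minimal_sdim :: "'a set \<Rightarrow> 'a set set \<Rightarrow> nat \<Rightarrow> bool" where
  "minor_minimal_sdim V E d \<longleftrightarrow> sdim V E = d \<and>
     (\<forall>V' E'. proper_minor (V', E') (V, E) \<longrightarrow> sdim V' E' < d)"

end

(* Call a 3-set Q of vertices a cover of the non-edges if every non-adjacent pair lies in Q.
   If G has such a Q, centre a spherical embedding f at the centre of its sphere: the vectors
   f p of the n - 3 vertices p outside Q have Gram matrix (r^2 - g) I + g J with r^2 - g = 1/2,
   which is nonsingular, and they are orthogonal to the chords f q1 - f q2 and f q1 - f q3 of Q.
   Three points of a sphere are never collinear, so these n - 1 vectors are linearly independent
   and sdim G >= n - 1.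
   On the other hand sdim G <= n - 2 if G has two disjoint non-adjacent pairs (a cross-polytope
   embedding), a vertex with three non-neighbours (an explicit configuration), or fewer than n
   vertices (a regular simplex); and a graph with neither of the first two features has a cover
   of its non-edges. Hence a minor-minimal G with sdim G = n - 1 has a cover Q, and Q must be
   independent since deleting the edges inside Q keeps sdim at n - 1: G = K_{n-3} + e_3.
   Conversely every proper minor of K_{n-3} + e_3 has fewer vertices or misses an edge, and a
   missing edge creates one of the two features. *)

theory Submission
  imports Defs "HOL-Library.Function_Algebras"
begin

definition sqdistR :: "nat \<Rightarrow> (nat \<Rightarrow> real) \<Rightarrow> (nat \<Rightarrow> real) \<Rightarrow> real" where
  "sqdistR k x y = (\<Sum>i<k. (x i - y i)\<^sup>2)"

lemma distR_eq_sqrt_sqdistR: "distR k x y = sqrt (sqdistR k x y)"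
  by (simp add: distR_def sqdistR_def)

lemma sqdistR_nonneg: "sqdistR k x y \<ge> 0"
  unfolding sqdistR_def by (intro sum_nonneg) auto

lemma sqdistR_commute: "sqdistR k x y = sqdistR k y x"
  unfolding sqdistR_def by (simp add: power2_commute)

lemma sqdistR_scale: "sqdistR k (\<lambda>i. c * x i) (\<lambda>i. c * y i) = c\<^sup>2 * sqdistR k x y"
  unfolding sqdistR_def by (simp add: sum_distrib_left power2_eq_square algebra_simps)

lemma sqdistR_eq_0_imp_eq:
  assumes "in_R k x" "in_R k y" "sqdistR k x y = 0"
  shows "x = y"
proof
  fix i
  have "\<forall>j\<in>{..<k}. (x j - y j)\<^sup>2 = 0"
    using assms(3) unfolding sqdistR_def by (subst sum_nonneg_eq_0_iff[symmetric]) auto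
  then show "x i = y i"
    using assms(1,2) by (cases "i < k") (auto simp: in_R_def)
qed

lemma collinear_on_sphere:
  assumes "in_R k u" "in_R k v"
    and "sqdistR k u c = R" "sqdistR k v c = R" "sqdistR k w c = R"
    and w: "w = (\<lambda>i. (1 - t) * u i + t * v i)"
  shows "w = u \<or> w = v"
proof -
  have "\<And>i. (w i - c i)\<^sup>2 = (1-t)*(u i - c i)\<^sup>2 + t*(v i - c i)\<^sup>2 - t*(1-t)*(u i - v i)\<^sup>2"
    using w by (simp add: power2_eq_square algebra_simps)
  then have "sqdistR k w c = (1-t) * sqdistR k u c + t * sqdistR k v c - t*(1-t) * sqdistR k u v"
    unfolding sqdistR_def by (simp add: sum_subtractf sum_distrib_left sum.distrib)
  then have "t * (1 - t) * sqdistR k u v = 0"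
    using assms(3-5) by (simp add: algebra_simps)
  then consider "t = 0" | "t = 1" | "u = v"
    using sqdistR_eq_0_imp_eq[OF assms(1,2)] by auto
  then show ?thesis
    using w by cases (auto simp: algebra_simps)
qed

lemma simple_graph_edgeD:
  assumes "simple_graph V E" "{u, v} \<in> E"
  shows "u \<in> V" "v \<in> V" "u \<noteq> v"
proof -
  obtain a b where "{u, v} = {a, b}" "a \<noteq> b" "a \<in> V" "b \<in> V"
    using assms unfolding simple_graph_def by blast
  then show "u \<in> V" "v \<in> V" "u \<noteq> v" by (auto simp: doubleton_eq_iff)
qed

lemma spherical_embeddingI:
  assumes sg: "simple_graph V E" and inj: "inj_on f V"
    and in_R: "\<forall>v\<in>V. in_R k (f v)" "in_R k c"
    and sphere: "\<forall>v\<in>V. sqdistR k (f v) c = R"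
    and unit: "\<forall>u\<in>V. \<forall>v\<in>V. u \<noteq> v \<longrightarrow> {u, v} \<in> E \<longrightarrow> sqdistR k (f u) (f v) = 1"
  shows "spherical_embedding V E k (sqrt R)"
proof -
  have "\<not> (0 \<le> t \<and> t \<le> 1 \<and> f w = (\<lambda>i. (1 - t) * f u i + t * f v i))"
    if e: "{u, v} \<in> E" and w: "w \<in> V" "w \<noteq> u" "w \<noteq> v" for u v w t
  proof -
    have "u \<in> V" "v \<in> V" using simple_graph_edgeD[OF sg e] by auto
    then have "f w \<noteq> f u" "f w \<noteq> f v" using inj w by (auto dest: inj_onD)
    then show ?thesis
      using collinear_on_sphere[of k "f u" "f v" c R "f w" t] \<open>u \<in> V\<close> \<open>v \<in> V\<close> w in_R sphere
      by auto
  qed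
  moreover have "distR k (f u) (f v) = 1" if "{u, v} \<in> E" for u v
    using simple_graph_edgeD[OF sg that] unit that by (simp add: distR_eq_sqrt_sqdistR)
  ultimately have "unit_distance_embedding V E k f"
    using inj in_R unfolding unit_distance_embedding_def by blast
  then show ?thesis
    unfolding spherical_embedding_def
    using in_R sphere by (auto simp: distR_eq_sqrt_sqdistR)
qed

lemma sdim_le:
  assumes "spherical_embedding V E k r" "r < 1"
  shows "sdim V E \<le> k"
  unfolding sdim_def using assms by (intro Least_le) blast

section \<open>Cross-polytope embeddings\<close>

text \<open>The vertices \<open>\<plusminus>e\<^sub>i/\<surd>2\<close> of the cross-polytope lie on the sphere of radius
  \<open>1/\<surd>2\<close>, and any two of them that are not antipodal are at distance 1.\<close>

definition cross_vertex :: "nat \<times> bool \<Rightarrow> nat \<Rightarrow> real" where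
  "cross_vertex p = (\<lambda>j. if j = fst p then (if snd p then sqrt (1/2) else - sqrt (1/2)) else 0)"

lemma cross_vertex_in_R: "fst p < k \<Longrightarrow> in_R k (cross_vertex p)"
  by (auto simp: in_R_def cross_vertex_def)

lemma inj_cross_vertex: "inj cross_vertex"
proof (rule injI)
  fix p q assume "cross_vertex p = cross_vertex q"
  then have "cross_vertex p (fst p) = cross_vertex q (fst p)" by simp
  then show "p = q"
    by (auto simp: cross_vertex_def prod_eq_iff split: if_splits)
qed

lemma sqdistR_cross_vertex_0:
  assumes "fst p < k"
  shows "sqdistR k (cross_vertex p) (\<lambda>_. 0) = 1/2"
proof -
  have "(cross_vertex p j - 0)\<^sup>2 = (if j = fst p then 1/2 else 0)" for j
    by (auto simp: cross_vertex_def)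
  then show ?thesis unfolding sqdistR_def using assms by simp
qed

lemma sqdistR_cross_vertex:
  assumes "fst p < k" "fst q < k" "fst p \<noteq> fst q"
  shows "sqdistR k (cross_vertex p) (cross_vertex q) = 1"
proof -
  have "(cross_vertex p j - cross_vertex q j)\<^sup>2
      = (if j = fst p then 1/2 else 0) + (if j = fst q then 1/2 else 0)" for j
    using assms(3) by (auto simp: cross_vertex_def)
  then show ?thesis
    unfolding sqdistR_def using assms by (simp add: sum.distrib)
qed

lemma cross_polytope_embedding:
  fixes \<phi> :: "'a \<Rightarrow> nat \<times> bool"
  assumes sg: "simple_graph V E" and inj: "inj_on \<phi> V" and range: "\<forall>v\<in>V. fst (\<phi> v) < k"
    and adj: "\<forall>u\<in>V. \<forall>v\<in>V. u \<noteq> v \<longrightarrow> {u, v} \<in> E \<longrightarrow> fst (\<phi> u) \<noteq> fst (\<phi> v)"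
  shows "spherical_embedding V E k (sqrt (1/2))"
proof (rule spherical_embeddingI[OF sg _ _ _, where c = "\<lambda>_. 0"])
  show "inj_on (cross_vertex \<circ> \<phi>) V"
    using inj inj_on_subset[OF inj_cross_vertex] by (simp add: comp_inj_on)
  show "in_R k (\<lambda>_. 0)" by (simp add: in_R_def)
qed (use range adj in \<open>auto simp: cross_vertex_in_R sqdistR_cross_vertex_0 sqdistR_cross_vertex\<close>)

lemma sdim_le_cross_polytope:
  fixes \<phi> :: "'a \<Rightarrow> nat \<times> bool"
  assumes "simple_graph V E" "inj_on \<phi> V" "\<forall>v\<in>V. fst (\<phi> v) < k"
    "\<forall>u\<in>V. \<forall>v\<in>V. u \<noteq> v \<longrightarrow> {u, v} \<in> E \<longrightarrow> fst (\<phi> u) \<noteq> fst (\<phi> v)"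
  shows "sdim V E \<le> k"
  using cross_polytope_embedding[OF assms] by (rule sdim_le) (simp add: real_sqrt_less_iff)

lemma sdim_attained:
  assumes sg: "simple_graph V E"
  shows "\<exists>r<1. spherical_embedding V E (sdim V E) r"
proof -
  obtain h where h: "bij_betw h V {0..<card V}"
    using sg ex_bij_betw_finite_nat by (auto simp: simple_graph_def)
  have "spherical_embedding V E (card V) (sqrt (1/2))"
    by (rule cross_polytope_embedding[OF sg, of "\<lambda>v. (h v, True)"])
      (use h in \<open>auto simp: bij_betw_def inj_on_def\<close>)
  moreover have "sqrt (1/2::real) < 1" by (simp add: real_sqrt_less_iff)
  ultimately have "\<exists>k r. r < 1 \<and> spherical_embedding V E k r" by blast
  then show ?thesis
    unfolding sdim_def by (rule LeastI_ex)
qed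

definition nonadjacent :: "'a set \<Rightarrow> 'a set set \<Rightarrow> 'a \<Rightarrow> 'a \<Rightarrow> bool" where
  "nonadjacent V E u v \<longleftrightarrow> u \<in> V \<and> v \<in> V \<and> u \<noteq> v \<and> {u, v} \<notin> E"

lemma nonadjacent_sym: "nonadjacent V E u v \<Longrightarrow> nonadjacent V E v u"
  by (auto simp: nonadjacent_def insert_commute)

text \<open>Each non-adjacent pair \<open>a i, b i\<close> is sent to an antipodal pair of the cross-polytope,
  every other vertex to a coordinate vertex of its own.\<close>

lemma sdim_le_nonadjacent_matching:
  fixes a b :: "nat \<Rightarrow> 'a"
  assumes sg: "simple_graph V E" and inj: "inj_on a {..<t}" "inj_on b {..<t}"
    and disj: "a ` {..<t} \<inter> b ` {..<t} = {}"
    and nonadj: "\<forall>i<t. nonadjacent V E (a i) (b i)"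
  shows "sdim V E \<le> card V - t"
proof -
  let ?T = "{..<t}"
  define R where "R = V - (a ` ?T \<union> b ` ?T)"
  have finV: "finite V" using sg by (simp add: simple_graph_def)
  have sub: "a ` ?T \<union> b ` ?T \<subseteq> V" using nonadj by (auto simp: nonadjacent_def)
  have "card (a ` ?T \<union> b ` ?T) = 2 * t" using inj disj by (simp add: card_Un_disjoint card_image)
  then have cR: "card R + 2 * t = card V"
    using card_Diff_subset[of _ V] card_mono[OF finV sub] finite_subset[OF sub finV] sub
    unfolding R_def by simp
  obtain h where h: "bij_betw h R {0..<card R}"
    using ex_bij_betw_finite_nat finV unfolding R_def by blast
  define \<phi> where "\<phi> v = (if v \<in> a ` ?T then (the_inv_into ?T a v, True)
    else if v \<in> b ` ?T then (the_inv_into ?T b v, False) else (t + h v, True))" for v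
  have \<phi>_a: "\<phi> (a i) = (i, True)" if "i < t" for i
    using that inj by (simp add: \<phi>_def the_inv_into_f_f)
  have \<phi>_b: "\<phi> (b i) = (i, False)" if "i < t" for i
    using that inj disj by (auto simp: \<phi>_def the_inv_into_f_f)
  have \<phi>_R: "\<phi> v = (t + h v, True)" "h v < card R" if "v \<in> R" for v
    using that h by (auto simp: \<phi>_def R_def bij_betw_def)
  have h_inj: "u = v" if "u \<in> R" "v \<in> R" "h u = h v" for u v
    using that h by (auto simp: bij_betw_def dest: inj_onD)
  have V_cases: "(\<exists>i<t. v = a i) \<or> (\<exists>i<t. v = b i) \<or> v \<in> R" if "v \<in> V" for v
    using that by (auto simp: R_def)
  have fst_eq: "u = v \<or> (\<exists>i<t. {u, v} = {a i, b i})"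
    if "u \<in> V" "v \<in> V" "fst (\<phi> u) = fst (\<phi> v)" for u v
    using V_cases[OF that(1)] V_cases[OF that(2)] that(3) h_inj
    by (auto simp: \<phi>_a \<phi>_b \<phi>_R insert_commute)
  show ?thesis
  proof (rule sdim_le_cross_polytope[OF sg])
    show "inj_on \<phi> V"
    proof (rule inj_onI)
      fix u v assume "u \<in> V" "v \<in> V" "\<phi> u = \<phi> v"
      then show "u = v"
        using fst_eq[of u v] by (auto simp: doubleton_eq_iff \<phi>_a \<phi>_b)
    qed
    show "\<forall>v\<in>V. fst (\<phi> v) < card V - t"
    proof
      fix v assume "v \<in> V"
      then show "fst (\<phi> v) < card V - t"
        using V_cases[of v] cR \<phi>_R[of v] by (auto simp: \<phi>_a \<phi>_b)
    qed
    show "\<forall>u\<in>V. \<forall>v\<in>V. u \<noteq> v \<longrightarrow> {u, v} \<in> E \<longrightarrow> fst (\<phi> u) \<noteq> fst (\<phi> v)"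
      using fst_eq nonadj by (metis nonadjacent_def)
  qed
qed

lemma sdim_le_two_disjoint_nonadjacent:
  assumes sg: "simple_graph V E"
    and "nonadjacent V E a\<^sub>1 b\<^sub>1" "nonadjacent V E a\<^sub>2 b\<^sub>2" "{a\<^sub>1, b\<^sub>1} \<inter> {a\<^sub>2, b\<^sub>2} = {}"
  shows "sdim V E \<le> card V - 2"
proof -
  have T: "{..<2::nat} = {0, 1}" by auto
  show ?thesis
    by (rule sdim_le_nonadjacent_matching[OF sg, where a = "\<lambda>i. if i = 0 then a\<^sub>1 else a\<^sub>2"
          and b = "\<lambda>i. if i = 0 then b\<^sub>1 else b\<^sub>2"])
      (use assms in \<open>auto simp: T less_2_cases_iff nonadjacent_def\<close>)
qed

section \<open>A configuration for a vertex with three non-neighbours\<close>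

lemma sum_indicator_plus_const:
  fixes c :: real
  assumes "j < m"
  shows "(\<Sum>i<m. ((if i = j then 1 else 0) + c)\<^sup>2) = 1 + 2 * c + real m * c\<^sup>2"
proof -
  have "((if i = j then 1 else 0) + c)\<^sup>2 = (if i = j then 1 + 2 * c else 0) + c\<^sup>2" for i
    by (auto simp: power2_eq_square algebra_simps)
  then show ?thesis using assms by (simp add: sum.distrib)
qed

lemma sum_two_indicators:
  fixes a b :: real and i i' k :: nat
  assumes "i < k" "i' < k" "i \<noteq> i'"
  shows "(\<Sum>j<k. ((if j = i then a else 0) - (if j = i' then b else 0))\<^sup>2) = a\<^sup>2 + b\<^sup>2"
proof -
  have "((if j = i then a else 0) - (if j = i' then b else 0))\<^sup>2
      = (if j = i then a\<^sup>2 else 0) + (if j = i' then b\<^sup>2 else 0)" for j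
    using assms(3) by auto
  moreover have "(\<Sum>j<k. if j = i then a\<^sup>2 else 0) = a\<^sup>2"
    using assms(1) by (subst sum.delta) auto
  moreover have "(\<Sum>j<k. if j = i' then b\<^sup>2 else 0) = b\<^sup>2"
    using assms(2) by (subst sum.delta) auto
  ultimately show ?thesis by (simp add: sum.distrib)
qed

text \<open>A configuration of \<open>m + 4\<close> points in \<open>\<real>\<^sup>m\<^sup>+\<^sup>2\<close>, all at distance \<open>\<surd>2\<close> from each other except
  point \<open>m + 3\<close> from the points \<open>m, m + 1, m + 2\<close>. Points \<open>j < m\<close> are \<open>e\<^sub>j + \<beta>\<one>\<close>, points
  \<open>j \<ge> m\<close> are \<open>\<delta>\<one>\<close> plus a point of the last two coordinates: the vertices of an equilateral
  triangle of side \<open>\<surd>2\<close> and the antipode of its first vertex. The constants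
  \<open>\<beta>\<close> and \<open>\<delta>\<close> solve \<open>|e\<^sub>j + \<beta>\<one>|\<^sup>2 = m \<delta>\<^sup>2 + 2/3\<close> (a common sphere about 0) and
  \<open>|e\<^sub>j + (\<beta> - \<delta>)\<one>|\<^sup>2 + 2/3 = 2\<close>.\<close>

locale star_configuration =
  fixes m :: nat
begin

definition \<sigma> :: real where "\<sigma> = sqrt (3 / (real m + 3))"
definition \<beta> :: real where "\<beta> = - \<sigma>\<^sup>2 / (3 * (1 + \<sigma>))"
definition \<delta> :: real where "\<delta> = - \<sigma> / 3"
definition \<alpha> :: real where "\<alpha> = sqrt (2/3)"

definition plane_x :: "nat \<Rightarrow> real" where
  "plane_x j = (if j = m then \<alpha> else if j = m + 1 \<or> j = m + 2 then - \<alpha> / 2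
     else if j = m + 3 then - \<alpha> else 0)"

definition plane_y :: "nat \<Rightarrow> real" where
  "plane_y j = (if j = m + 1 then sqrt (1/2) else if j = m + 2 then - sqrt (1/2) else 0)"

definition point :: "nat \<Rightarrow> nat \<Rightarrow> real" where
  "point j = (\<lambda>i. if i < m then (if j < m then (if i = j then 1 else 0) + \<beta> else \<delta>)
     else if i = m then plane_x j else if i = m + 1 then plane_y j else 0)"

lemma \<sigma>_pos: "\<sigma> > 0"
  by (simp add: \<sigma>_def)

lemma m_eq: "real m = 3 / \<sigma>\<^sup>2 - 3"
  using \<sigma>_pos by (simp add: \<sigma>_def field_simps)

lemma \<alpha>_sq: "\<alpha>\<^sup>2 = 2/3"
  by (simp add: \<alpha>_def)

lemma simplex_plane_identity: "1 + 2 * (\<beta> - \<delta>) + real m * (\<beta> - \<delta>)\<^sup>2 + 2/3 = 2"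
proof -
  have h: "1 + \<sigma> \<noteq> 0" "\<sigma> \<noteq> 0" using \<sigma>_pos by auto
  have D: "\<beta> - \<delta> = \<sigma> / (3 * (1 + \<sigma>))"
    unfolding \<beta>_def \<delta>_def using h by (simp add: field_simps power2_eq_square)
  have "real m * (\<sigma> / (3 * (1 + \<sigma>)))\<^sup>2 = (3 - 3 * \<sigma>\<^sup>2) / (9 * (1 + \<sigma>)\<^sup>2)"
    unfolding m_eq using h by (simp add: divide_simps) (simp add: algebra_simps power2_eq_square)
  also have "\<dots> = (1 - \<sigma>) / (3 * (1 + \<sigma>))"
    using h by (simp add: divide_simps) (simp add: algebra_simps power2_eq_square)
  finally have mD: "real m * (\<sigma> / (3 * (1 + \<sigma>)))\<^sup>2 = (1 - \<sigma>) / (3 * (1 + \<sigma>))" .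
  show ?thesis unfolding D mD using h by (simp add: divide_simps)
qed

lemma simplex_radius: "1 + 2 * \<beta> + real m * \<beta>\<^sup>2 = 1 - \<sigma>\<^sup>2 / 3"
proof -
  have h: "1 + \<sigma> \<noteq> 0" "\<sigma> \<noteq> 0" using \<sigma>_pos by auto
  have "real m * \<beta>\<^sup>2 = (3 - 3 * \<sigma>\<^sup>2) * \<sigma>\<^sup>2 / (9 * (1 + \<sigma>)\<^sup>2)"
    unfolding m_eq \<beta>_def using h by (simp add: divide_simps) (simp add: algebra_simps power2_eq_square)
  also have "\<dots> = \<sigma>\<^sup>2 * (1 - \<sigma>) / (3 * (1 + \<sigma>))"
    using h by (simp add: divide_simps) (simp add: algebra_simps power2_eq_square)
  finally show ?thesis
    using h unfolding \<beta>_def by (simp add: divide_simps) (simp add: algebra_simps power2_eq_square)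
qed

lemma plane_radius: "real m * \<delta>\<^sup>2 + 2/3 = 1 - \<sigma>\<^sup>2 / 3"
  using \<sigma>_pos unfolding m_eq \<delta>_def by (simp add: field_simps power2_eq_square)

lemma sqdistR_split:
  "sqdistR (m + 2) x y = (\<Sum>i<m. (x i - y i)\<^sup>2) + (x m - y m)\<^sup>2 + (x (m + 1) - y (m + 1))\<^sup>2"
  by (simp add: sqdistR_def)

lemma plane_norm: "m \<le> j \<Longrightarrow> j < m + 4 \<Longrightarrow> (plane_x j)\<^sup>2 + (plane_y j)\<^sup>2 = 2/3"
  using \<alpha>_sq by (auto simp: plane_x_def plane_y_def power_divide le_less_Suc_eq
      numeral_eq_Suc less_Suc_eq)

lemma sqdistR_simplex_simplex:
  assumes "j < m" "j' < m" "j \<noteq> j'"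
  shows "sqdistR (m + 2) (point j) (point j') = 2"
proof -
  have "(\<Sum>i<m. (point j i - point j' i)\<^sup>2)
      = (\<Sum>i<m. ((if i = j then 1 else 0) - (if i = j' then 1 else 0))\<^sup>2)"
    using assms by (intro sum.cong) (auto simp: point_def)
  also have "\<dots> = 2" using sum_two_indicators[of j m j' 1 1] assms by simp
  finally show ?thesis unfolding sqdistR_split using assms by (simp add: point_def plane_x_def plane_y_def)
qed

lemma sqdistR_simplex_plane:
  assumes "j < m" "m \<le> j'" "j' < m + 4"
  shows "sqdistR (m + 2) (point j) (point j') = 2"
proof -
  have "(\<Sum>i<m. (point j i - point j' i)\<^sup>2) = (\<Sum>i<m. ((if i = j then 1 else 0) + (\<beta> - \<delta>))\<^sup>2)"
    using assms by (intro sum.cong) (auto simp: point_def algebra_simps)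
  also have "\<dots> = 1 + 2 * (\<beta> - \<delta>) + real m * (\<beta> - \<delta>)\<^sup>2"
    by (rule sum_indicator_plus_const[OF assms(1)])
  finally have "(\<Sum>i<m. (point j i - point j' i)\<^sup>2) = 1 + 2 * (\<beta> - \<delta>) + real m * (\<beta> - \<delta>)\<^sup>2" .
  moreover have "(point j m - point j' m)\<^sup>2 + (point j (m + 1) - point j' (m + 1))\<^sup>2 = 2/3"
    using assms plane_norm[OF assms(2,3)] by (simp add: point_def plane_x_def plane_y_def)
  ultimately show ?thesis unfolding sqdistR_split using simplex_plane_identity by linarith
qed

lemma sqdistR_triangle:
  assumes "m \<le> j" "j < m + 3" "m \<le> j'" "j' < m + 3" "j \<noteq> j'"
  shows "sqdistR (m + 2) (point j) (point j') = 2"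
proof -
  have "(\<Sum>i<m. (point j i - point j' i)\<^sup>2) = 0"
    using assms by (intro sum.neutral) (auto simp: point_def)
  moreover have "(plane_x j - plane_x j')\<^sup>2 + (plane_y j - plane_y j')\<^sup>2 = 2"
    using assms \<alpha>_sq
    by (auto simp: plane_x_def plane_y_def power2_eq_square algebra_simps le_less_Suc_eq
        numeral_eq_Suc less_Suc_eq)
  ultimately show ?thesis unfolding sqdistR_split using assms by (simp add: point_def)
qed

lemma sqdistR_point_0:
  assumes "j < m + 4"
  shows "sqdistR (m + 2) (point j) (\<lambda>_. 0) = 1 - \<sigma>\<^sup>2 / 3"
proof (cases "j < m")
  case True
  have "(\<Sum>i<m. (point j i - 0)\<^sup>2) = (\<Sum>i<m. ((if i = j then 1 else 0) + \<beta>)\<^sup>2)"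
    using True by (intro sum.cong) (auto simp: point_def)
  also have "\<dots> = 1 + 2 * \<beta> + real m * \<beta>\<^sup>2" by (rule sum_indicator_plus_const[OF True])
  finally show ?thesis
    unfolding sqdistR_split using True simplex_radius by (simp add: point_def plane_x_def plane_y_def)
next
  case False
  have "(\<Sum>i<m. (point j i - 0)\<^sup>2) = real m * \<delta>\<^sup>2"
    using False by (simp add: point_def)
  moreover have "(point j m - 0)\<^sup>2 + (point j (m + 1) - 0)\<^sup>2 = 2/3"
    using plane_norm[of j] False assms by (simp add: point_def)
  ultimately show ?thesis unfolding sqdistR_split using plane_radius by linarith
qed

lemma point_in_R: "in_R (m + 2) (point j)"
  by (auto simp: in_R_def point_def)

lemma inj_on_point: "inj_on point {..<m + 4}"
proof (rule inj_onI, rule ccontr)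
  fix j j' assume j: "j \<in> {..<m + 4}" and j': "j' \<in> {..<m + 4}"
    and eq: "point j = point j'" and ne: "j \<noteq> j'"
  have "sqdistR (m + 2) (point j) (point j') \<noteq> 2" using eq by (simp add: sqdistR_def)
  moreover have "plane_x j = plane_x j'" using fun_cong[OF eq, of m] by (simp add: point_def)
  ultimately consider "j < m" "j' < m" | "j < m" "m \<le> j'" | "m \<le> j" "j' < m"
    | "m \<le> j" "m \<le> j'" "j < m + 3" "j' < m + 3" | "j = m + 3 \<or> j' = m + 3" "m \<le> j" "m \<le> j'"
    using j j' by fastforce
  then show False
  proof cases
    case 5
    with \<open>plane_x j = plane_x j'\<close> ne j j' show False
      by (auto simp: plane_x_def \<alpha>_def less_Suc_eq numeral_eq_Suc)
  qed (use \<open>sqdistR (m + 2) (point j) (point j') \<noteq> 2\<close> ne j' j in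
      \<open>metis sqdistR_simplex_simplex sqdistR_simplex_plane sqdistR_triangle sqdistR_commute
        lessThan_iff\<close>)+
qed

lemma sdim_le:
  fixes \<phi> :: "'a \<Rightarrow> nat"
  assumes sg: "simple_graph V E" and inj: "inj_on \<phi> V" and range: "\<forall>v\<in>V. \<phi> v < m + 4"
    and adj: "\<forall>u\<in>V. \<forall>v\<in>V. u \<noteq> v \<longrightarrow> {u, v} \<in> E \<longrightarrow> \<phi> u = m + 3 \<longrightarrow> \<phi> v < m"
  shows "sdim V E \<le> m + 2"
proof -
  define f where "f v = (\<lambda>i. sqrt (1/2) * point (\<phi> v) i)" for v
  have sq: "sqdistR (m + 2) (f u) (f v) = sqdistR (m + 2) (point (\<phi> u)) (point (\<phi> v)) / 2" for u v
    unfolding f_def sqdistR_scale by simp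
  have "spherical_embedding V E (m + 2) (sqrt ((1 - \<sigma>\<^sup>2 / 3) / 2))"
  proof (rule spherical_embeddingI[OF sg])
    show "inj_on f V"
    proof (rule inj_onI)
      fix u v assume "u \<in> V" "v \<in> V" "f u = f v"
      then have "point (\<phi> u) = point (\<phi> v)" by (auto simp: f_def fun_eq_iff)
      then show "u = v"
        using inj_onD[OF inj_on_point] inj_onD[OF inj] range \<open>u \<in> V\<close> \<open>v \<in> V\<close> by auto
    qed
    show "\<forall>v\<in>V. in_R (m + 2) (f v)" "in_R (m + 2) (\<lambda>_. 0)"
      using point_in_R by (auto simp: f_def in_R_def)
    show "\<forall>v\<in>V. sqdistR (m + 2) (f v) (\<lambda>_. 0) = (1 - \<sigma>\<^sup>2 / 3) / 2"
      using sqdistR_scale[of "m + 2" "sqrt (1/2)" "point (\<phi> _)" "\<lambda>_. 0"] sqdistR_point_0 range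
      by (auto simp: f_def)
    show "\<forall>u\<in>V. \<forall>v\<in>V. u \<noteq> v \<longrightarrow> {u, v} \<in> E \<longrightarrow> sqdistR (m + 2) (f u) (f v) = 1"
    proof (intro ballI impI)
      fix u v assume uv: "u \<in> V" "v \<in> V" "u \<noteq> v" "{u, v} \<in> E"
      have ne: "\<phi> u \<noteq> \<phi> v" using inj uv by (auto dest: inj_onD)
      have "\<phi> u = m + 3 \<longrightarrow> \<phi> v < m" "\<phi> v = m + 3 \<longrightarrow> \<phi> u < m"
        using adj uv by (auto simp: insert_commute)
      then consider "\<phi> u < m" "\<phi> v < m" | "\<phi> u < m" "m \<le> \<phi> v" | "m \<le> \<phi> u" "\<phi> v < m"
        | "m \<le> \<phi> u" "m \<le> \<phi> v" "\<phi> u < m + 3" "\<phi> v < m + 3"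
        using range uv by fastforce
      then have "sqdistR (m + 2) (point (\<phi> u)) (point (\<phi> v)) = 2"
        using ne range uv
        by cases (metis sqdistR_simplex_simplex sqdistR_simplex_plane sqdistR_triangle sqdistR_commute)+
      then show "sqdistR (m + 2) (f u) (f v) = 1" using sq[of u v] by simp
    qed
  qed
  then show ?thesis
    by (rule sdim_le) (simp add: real_sqrt_less_iff, smt (verit) zero_le_power2)
qed

end

lemma sdim_le_three_nonneighbours:
  assumes sg: "simple_graph V E"
    and nonadj: "nonadjacent V E s x" "nonadjacent V E s y" "nonadjacent V E s z"
    and distinct: "x \<noteq> y" "x \<noteq> z" "y \<noteq> z"
  shows "sdim V E \<le> card V - 2"
proof -
  have finV: "finite V" using sg by (simp add: simple_graph_def)
  define R where "R = V - {s, x, y, z}"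
  define m where "m = card R"
  have sub: "{s, x, y, z} \<subseteq> V" using nonadj by (auto simp: nonadjacent_def)
  have "card {s, x, y, z} = 4" using nonadj distinct by (auto simp: nonadjacent_def)
  then have cV: "card V = m + 4"
    using card_Diff_subset[OF _ sub] card_mono[OF finV sub] unfolding m_def R_def by simp
  obtain h where h: "bij_betw h R {0..<m}"
    using ex_bij_betw_finite_nat finV unfolding R_def m_def by blast
  define \<phi> where "\<phi> v = (if v = x then m else if v = y then m + 1 else if v = z then m + 2
    else if v = s then m + 3 else h v)" for v
  have \<phi>_simps: "\<phi> x = m" "\<phi> y = m + 1" "\<phi> z = m + 2" "\<phi> s = m + 3"
    using nonadj distinct by (auto simp: \<phi>_def nonadjacent_def)
  have \<phi>_R: "\<phi> v = h v" "h v < m" if "v \<in> R" for v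
    using that h by (auto simp: \<phi>_def R_def bij_betw_def)
  have h_inj: "u = v" if "u \<in> R" "v \<in> R" "h u = h v" for u v
    using that h by (auto simp: bij_betw_def dest: inj_onD)
  have V_cases: "v \<in> R \<or> v = s \<or> v = x \<or> v = y \<or> v = z" if "v \<in> V" for v
    using that by (auto simp: R_def)
  have "sdim V E \<le> m + 2"
  proof (rule star_configuration.sdim_le[OF sg])
    show "inj_on \<phi> V"
    proof (rule inj_onI)
      fix u v assume "u \<in> V" "v \<in> V" "\<phi> u = \<phi> v"
      then show "u = v"
        using V_cases[of u] V_cases[of v] \<phi>_R[of u] \<phi>_R[of v] h_inj by (auto simp: \<phi>_simps)
    qed
    show "\<forall>v\<in>V. \<phi> v < m + 4"
      using V_cases \<phi>_R by (fastforce simp: \<phi>_simps)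
    show "\<forall>u\<in>V. \<forall>v\<in>V. u \<noteq> v \<longrightarrow> {u, v} \<in> E \<longrightarrow> \<phi> u = m + 3 \<longrightarrow> \<phi> v < m"
    proof (intro ballI impI)
      fix u v assume uv: "u \<in> V" "v \<in> V" "u \<noteq> v" "{u, v} \<in> E" "\<phi> u = m + 3"
      then have "u = s" using V_cases[of u] \<phi>_R[of u] by (auto simp: \<phi>_simps)
      then have "v \<in> R" using V_cases[OF uv(2)] uv nonadj by (auto simp: nonadjacent_def)
      then show "\<phi> v < m" using \<phi>_R by simp
    qed
  qed
  then show ?thesis using cV by simp
qed

text \<open>The points \<open>j < m + 3\<close> of the star configuration form a regular simplex.\<close>

lemma sdim_le_of_card_le_Suc:
  assumes sg: "simple_graph V E" and "card V \<le> k + 1" "2 \<le> k"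
  shows "sdim V E \<le> k"
proof -
  obtain h where h: "bij_betw h V {0..<card V}"
    using sg ex_bij_betw_finite_nat by (auto simp: simple_graph_def)
  have lt: "h v < k - 2 + 3" if "v \<in> V" for v
  proof -
    have "h v < card V" using that h by (auto simp: bij_betw_def)
    then show ?thesis using assms(2,3) by linarith
  qed
  have "sdim V E \<le> k - 2 + 2"
  proof (rule star_configuration.sdim_le[OF sg])
    show "inj_on h V" using h by (simp add: bij_betw_def)
  qed (use lt in fastforce)+
  then show ?thesis using assms(3) by simp
qed

section \<open>Linear algebra in coordinates\<close>

definition fscale :: "real \<Rightarrow> (nat \<Rightarrow> real) \<Rightarrow> nat \<Rightarrow> real" where
  "fscale c x = (\<lambda>i. c * x i)"

lemma fscale_apply [simp]: "fscale c x i = c * x i"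
  by (simp add: fscale_def)

interpretation fvec: vector_space fscale
  by unfold_locales (auto simp: fscale_def fun_eq_iff algebra_simps)

definition dotR :: "nat \<Rightarrow> (nat \<Rightarrow> real) \<Rightarrow> (nat \<Rightarrow> real) \<Rightarrow> real" where
  "dotR k x y = (\<Sum>i<k. x i * y i)"

lemma sum_apply: "(\<Sum>v\<in>A. F v) i = (\<Sum>v\<in>A. F v i)"
  by (induction A rule: infinite_finite_induct) auto

lemma dotR_commute: "dotR k x y = dotR k y x"
  by (simp add: dotR_def mult.commute)

lemma dotR_sum_left: "dotR k (\<Sum>v\<in>A. F v) y = (\<Sum>v\<in>A. dotR k (F v) y)"
  unfolding dotR_def sum_apply by (simp add: sum_distrib_right sum.swap[of _ A])

lemma dotR_sum_right: "dotR k y (\<Sum>v\<in>A. F v) = (\<Sum>v\<in>A. dotR k y (F v))"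
  using dotR_sum_left[of k F A y] by (simp add: dotR_commute)

lemma dotR_fscale_left: "dotR k (fscale c x) y = c * dotR k x y"
  unfolding dotR_def by (simp add: sum_distrib_left algebra_simps)

lemma dotR_fscale_right: "dotR k y (fscale c x) = c * dotR k y x"
  using dotR_fscale_left[of k c x y] by (simp add: dotR_commute)

lemma dotR_add_right: "dotR k z (x + y) = dotR k z x + dotR k z y"
  unfolding dotR_def by (simp add: sum.distrib algebra_simps)

lemma dotR_diff_right: "dotR k z (x - y) = dotR k z x - dotR k z y"
  unfolding dotR_def by (simp add: sum_subtractf algebra_simps)

lemma dotR_zero_left [simp]: "dotR k 0 x = 0"
  by (simp add: dotR_def)

lemma dotR_zero_right [simp]: "dotR k x 0 = 0"
  by (simp add: dotR_def)

lemma sqdistR_eq_dotR: "sqdistR k x y = dotR k (x - y) (x - y)"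
  unfolding sqdistR_def dotR_def by (simp add: power2_eq_square)

lemma dotR_diff_self: "dotR k (x - y) (x - y) = dotR k x x - 2 * dotR k x y + dotR k y y"
  unfolding dotR_def by (simp add: power2_eq_square sum.distrib sum_subtractf sum_distrib_left
    algebra_simps)

lemma dotR_self_eq_0:
  assumes "in_R k x" "dotR k x x = 0"
  shows "x = 0"
  using sqdistR_eq_0_imp_eq[of k x 0] assms by (simp add: sqdistR_eq_dotR in_R_def)

lemma in_R_diff: "in_R k x \<Longrightarrow> in_R k y \<Longrightarrow> in_R k (x - y)"
  by (simp add: in_R_def)

lemma in_R_fscale: "in_R k x \<Longrightarrow> in_R k (fscale c x)"
  by (simp add: in_R_def)

lemma in_R_sum: "(\<And>v. v \<in> A \<Longrightarrow> in_R k (F v)) \<Longrightarrow> in_R k (\<Sum>v\<in>A. F v)"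
  by (simp add: in_R_def sum_apply)

definition unit_vec :: "nat \<Rightarrow> nat \<Rightarrow> real" where
  "unit_vec i = (\<lambda>j. if j = i then 1 else 0)"

lemma in_R_imp_in_span: "in_R k x \<Longrightarrow> x \<in> fvec.span (unit_vec ` {..<k})"
proof -
  assume x: "in_R k x"
  have "x = (\<Sum>i<k. fscale (x i) (unit_vec i))"
  proof
    fix j
    show "x j = (\<Sum>i<k. fscale (x i) (unit_vec i)) j"
      using x by (cases "j < k") (auto simp: sum_apply unit_vec_def in_R_def if_distrib cong: if_cong)
  qed
  also have "\<dots> \<in> fvec.span (unit_vec ` {..<k})"
    by (intro fvec.span_sum fvec.span_scale fvec.span_base) auto
  finally show ?thesis .
qed

lemma card_le_of_independent_in_R:
  assumes "\<not> fvec.dependent S" "\<forall>x\<in>S. in_R k x"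
  shows "finite S" "card S \<le> k"
proof -
  have "inj unit_vec"
    by (rule injI) (metis unit_vec_def zero_neq_one)
  then have "card (unit_vec ` {..<k}) = k"
    by (simp add: card_image inj_on_subset)
  moreover have "S \<subseteq> fvec.span (unit_vec ` {..<k})"
    using in_R_imp_in_span assms(2) by blast
  ultimately show "finite S" "card S \<le> k"
    using fvec.independent_span_bound[OF _ assms(1), of "unit_vec ` {..<k}"] by auto
qed

lemma orthogonal_independent_disjoint:
  assumes "\<not> fvec.dependent A" "\<forall>a\<in>A. in_R k a" "\<forall>a\<in>A. \<forall>b\<in>B. dotR k a b = 0"
  shows "A \<inter> B = {}"
proof (rule ccontr)
  assume "A \<inter> B \<noteq> {}"
  then obtain x where "x \<in> A" "dotR k x x = 0" using assms(3) by blast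
  then have "0 \<in> A" using dotR_self_eq_0 assms(2) by fastforce
  then show False using assms(1) fvec.dependent_zero by blast
qed

lemma independent_orthogonal_Un:
  assumes indep: "\<not> fvec.dependent A" "\<not> fvec.dependent B"
    and in_R: "\<forall>a\<in>A. in_R k a" "\<forall>b\<in>B. in_R k b"
    and orth: "\<forall>a\<in>A. \<forall>b\<in>B. dotR k a b = 0"
  shows "\<not> fvec.dependent (A \<union> B)"
proof
  assume "fvec.dependent (A \<union> B)"
  moreover have fin: "finite A" "finite B"
    using card_le_of_independent_in_R indep in_R by blast+
  ultimately obtain w where w: "\<exists>v\<in>A \<union> B. w v \<noteq> 0" "(\<Sum>v\<in>A \<union> B. fscale (w v) v) = 0"
    using fvec.dependent_finite by blast
  define a where "a = (\<Sum>v\<in>A. fscale (w v) v)"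
  define b where "b = (\<Sum>v\<in>B. fscale (w v) v)"
  have "a + b = 0"
    using w(2) orthogonal_independent_disjoint[OF indep(1) in_R(1) orth] fin
    by (simp add: a_def b_def sum.union_disjoint)
  moreover have "dotR k a b = 0"
    using orth by (simp add: a_def b_def dotR_sum_left dotR_sum_right dotR_fscale_left
        dotR_fscale_right)
  ultimately have "dotR k a a = 0"
    using dotR_add_right[of k a a b] by simp
  moreover have "in_R k a"
    unfolding a_def using in_R by (intro in_R_sum in_R_fscale) auto
  ultimately have "a = 0" by (rule dotR_self_eq_0[rotated])
  with \<open>a + b = 0\<close> have "b = 0" by simp
  have "\<forall>v\<in>A. w v = 0" "\<forall>v\<in>B. w v = 0"
    using fvec.independentD[OF indep(1) fin(1) order_refl] fvec.independentD[OF indep(2) fin(2) order_refl]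
      \<open>a = 0\<close> \<open>b = 0\<close> unfolding a_def b_def by blast+
  then show False using w(1) by blast
qed

lemma sum_diagonal_offdiagonal:
  fixes w :: "'a \<Rightarrow> real"
  assumes "finite C" "p \<in> C"
  shows "(\<Sum>q\<in>C. (if p = q then r else g) * w q) = (r - g) * w p + g * (\<Sum>q\<in>C. w q)"
proof -
  have "(\<Sum>q\<in>C. (if p = q then r else g) * w q) = (\<Sum>q\<in>C. g * w q + (if p = q then (r - g) * w p else 0))"
    by (intro sum.cong) (auto simp: algebra_simps)
  then show ?thesis using assms by (simp add: sum.distrib sum_distrib_left)
qed

lemma equiangular_coefficients_zero:
  fixes w :: "'a \<Rightarrow> real"
  assumes fin: "finite C" and "r \<noteq> g" "r + g * (real (card C) - 1) \<noteq> 0"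
    and eqs: "\<forall>p\<in>C. (\<Sum>q\<in>C. (if p = q then r else g) * w q) = 0"
  shows "\<forall>p\<in>C. w p = 0"
proof -
  define W where "W = (\<Sum>q\<in>C. w q)"
  have each: "(r - g) * w p + g * W = 0" if "p \<in> C" for p
    using eqs[rule_format, OF that] sum_diagonal_offdiagonal[OF fin that] by (simp add: W_def)
  then have "(\<Sum>p\<in>C. (r - g) * w p + g * W) = 0" by simp
  moreover have "(\<Sum>p\<in>C. (r - g) * w p + g * W) = (r - g) * W + real (card C) * (g * W)"
    by (simp add: sum.distrib W_def sum_distrib_left)
  ultimately have "W * (r + g * (real (card C) - 1)) = 0"
    by (simp add: algebra_simps)
  then have "W = 0" using assms(3) by simp
  then show ?thesis using each \<open>r \<noteq> g\<close> by simp
qed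

text \<open>The hypothesis on \<open>y\<close> excludes a regular simplex centred at the origin, whose
  vectors sum to zero.\<close>

lemma equiangular_independent:
  fixes X :: "'a \<Rightarrow> nat \<Rightarrow> real"
  assumes fin: "finite C" and inj: "inj_on X C" and in_R: "\<forall>p\<in>C. in_R k (X p)"
    and gram: "\<forall>p\<in>C. \<forall>q\<in>C. dotR k (X p) (X q) = (if p = q then r else g)"
    and "r \<noteq> g" and y: "\<forall>p\<in>C. dotR k (X p) y = g"
  shows "\<not> fvec.dependent (X ` C)"
proof
  have dot_sum: "dotR k (X p) (\<Sum>q\<in>C. fscale (w q) (X q)) = (r - g) * w p + g * (\<Sum>q\<in>C. w q)"
    if "p \<in> C" for p w
    using sum_diagonal_offdiagonal[OF fin that, of r g w] gram that
    by (simp add: dotR_sum_right dotR_fscale_right mult.commute)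
  have nondegenerate: "r + g * (real (card C) - 1) \<noteq> 0"
  proof
    assume deg: "r + g * (real (card C) - 1) = 0"
    define U where "U = (\<Sum>q\<in>C. X q)"
    have "(\<Sum>q\<in>C. fscale 1 (X q)) = U" by (simp add: U_def)
    then have "dotR k (X p) U = r + g * (real (card C) - 1)" if "p \<in> C" for p
      using dot_sum[OF that, of "\<lambda>_. 1"] fin that by (simp add: algebra_simps)
    moreover have "dotR k U U = (\<Sum>p\<in>C. dotR k (X p) U)"
      by (subst (1) U_def) (rule dotR_sum_left)
    ultimately have "dotR k U U = (\<Sum>p\<in>C. r + g * (real (card C) - 1))"
      by simp
    then have "U = 0"
      using deg dotR_self_eq_0[of k U] in_R unfolding U_def by (simp add: in_R_sum)
    moreover have "dotR k U y = real (card C) * g"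
      using y by (simp add: U_def dotR_sum_left)
    ultimately have "real (card C) * g = 0" by simp
    then show False using deg \<open>r \<noteq> g\<close> by auto
  qed
  assume "fvec.dependent (X ` C)"
  then obtain u where u: "\<exists>v\<in>X ` C. u v \<noteq> 0" "(\<Sum>v\<in>X ` C. fscale (u v) v) = 0"
    using fvec.dependent_finite fin by blast
  have "(\<Sum>q\<in>C. fscale (u (X q)) (X q)) = 0"
    using u(2) inj by (simp add: sum.reindex)
  then have "\<forall>p\<in>C. (\<Sum>q\<in>C. (if p = q then r else g) * u (X q)) = 0"
    using dot_sum sum_diagonal_offdiagonal[OF fin] by (metis dotR_zero_right)
  then have "\<forall>p\<in>C. u (X p) = 0"
    by (rule equiangular_coefficients_zero[OF fin \<open>r \<noteq> g\<close> nondegenerate])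
  then show False using u(1) by blast
qed

lemma not_dependent_chords:
  assumes in_R: "in_R k u" "in_R k v" "in_R k w"
    and sphere: "sqdistR k u c = R" "sqdistR k v c = R" "sqdistR k w c = R"
    and distinct: "u \<noteq> v" "u \<noteq> w" "v \<noteq> w"
  shows "\<not> fvec.dependent {u - v, u - w}"
proof
  assume "fvec.dependent {u - v, u - w}"
  moreover have "u - v \<noteq> u - w" using distinct by (auto simp: fun_eq_iff)
  ultimately obtain a b where ab: "a \<noteq> 0 \<or> b \<noteq> 0" "fscale a (u - v) + fscale b (u - w) = 0"
    using fvec.dependent_finite[of "{u - v, u - w}"] by auto
  show False
  proof (cases "b = 0")
    case True
    then have "u - v = 0" using ab by (auto simp: fun_eq_iff)
    then show False using distinct by simp
  next
    case False
    define \<mu> where "\<mu> = - a / b"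
    have b\<mu>: "b * \<mu> = - a" using False by (simp add: \<mu>_def)
    have "w = (\<lambda>i. (1 - \<mu>) * u i + \<mu> * v i)"
    proof
      fix i
      have "b * ((1 - \<mu>) * u i + \<mu> * v i) = b * u i - (b * \<mu>) * u i + (b * \<mu>) * v i"
        by (simp add: algebra_simps)
      also have "\<dots> = b * u i + a * (u i - v i)"
        using b\<mu> by (simp add: algebra_simps)
      also have "\<dots> = b * w i"
        using fun_cong[OF ab(2), of i] by (simp add: algebra_simps)
      finally have "b * ((1 - \<mu>) * u i + \<mu> * v i) = b * w i" .
      then show "w i = (1 - \<mu>) * u i + \<mu> * v i" using False by simp
    qed
    then show False
      using collinear_on_sphere[OF in_R(1,2) sphere] distinct by metis
  qed
qed

section \<open>Graphs whose non-edges lie in a triple\<close>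

definition covers_nonedges :: "'a set \<Rightarrow> 'a set set \<Rightarrow> 'a set \<Rightarrow> bool" where
  "covers_nonedges V E Q \<longleftrightarrow> Q \<subseteq> V \<and> card Q = 3 \<and>
     (\<forall>u v. nonadjacent V E u v \<longrightarrow> u \<in> Q \<and> v \<in> Q)"

definition eps3_part :: "'a set \<Rightarrow> 'a set set \<Rightarrow> 'a set \<Rightarrow> bool" where
  "eps3_part V E Q \<longleftrightarrow> covers_nonedges V E Q \<and> (\<forall>u\<in>Q. \<forall>v\<in>Q. {u, v} \<notin> E)"

lemma card_le_dim_of_covers_nonedges:
  assumes sg: "simple_graph V E" and cov: "covers_nonedges V E Q"
    and emb: "spherical_embedding V E k r"
  shows "card V - 1 \<le> k"
proof -
  obtain f c where "unit_distance_embedding V E k f" "in_R k c"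
    and sphere: "\<forall>v\<in>V. distR k (f v) c = r"
    using emb unfolding spherical_embedding_def by blast
  then have inj: "inj_on f V" and in_R_f: "\<forall>v\<in>V. in_R k (f v)" and "in_R k c"
    and unit: "\<forall>u v. {u, v} \<in> E \<longrightarrow> distR k (f u) (f v) = 1"
    unfolding unit_distance_embedding_def by auto
  obtain q\<^sub>1 q\<^sub>2 q\<^sub>3 where Q: "Q = {q\<^sub>1, q\<^sub>2, q\<^sub>3}" "q\<^sub>1 \<noteq> q\<^sub>2" "q\<^sub>1 \<noteq> q\<^sub>3" "q\<^sub>2 \<noteq> q\<^sub>3"
    using cov card_3_iff unfolding covers_nonedges_def by metis
  have QV: "q\<^sub>1 \<in> V" "q\<^sub>2 \<in> V" "q\<^sub>3 \<in> V" using cov Q by (auto simp: covers_nonedges_def)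
  have finV: "finite V" using sg by (simp add: simple_graph_def)
  define C where "C = V - Q"
  define X where "X v = f v - c" for v
  define g where "g = r\<^sup>2 - 1/2"
  have in_R_X: "in_R k (X v)" if "v \<in> V" for v
    using in_R_f \<open>in_R k c\<close> that by (simp add: X_def in_R_diff)
  have on_sphere: "sqdistR k (f v) c = r\<^sup>2" if "v \<in> V" for v
    using sphere that sqdistR_nonneg[of k "f v" c] by (auto simp: distR_eq_sqrt_sqdistR)
  have norm: "dotR k (X v) (X v) = r\<^sup>2" if "v \<in> V" for v
    using on_sphere[OF that] by (simp add: X_def sqdistR_eq_dotR)
  have gram: "dotR k (X p) (X v) = (if p = v then r\<^sup>2 else g)" if "p \<in> C" "v \<in> V" for p v
  proof (cases "p = v")
    case True
    then show ?thesis using norm that by (simp add: C_def)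
  next
    case False
    then have "{p, v} \<in> E"
      using cov that by (auto simp: C_def covers_nonedges_def nonadjacent_def)
    then have "sqdistR k (f p) (f v) = 1"
      using unit sqdistR_nonneg[of k "f p" "f v"] by (simp add: distR_eq_sqrt_sqdistR)
    moreover have "f p - f v = X p - X v" by (simp add: X_def)
    ultimately show ?thesis
      using False norm that dotR_commute[of k "X p" "X v"]
      by (simp add: sqdistR_eq_dotR dotR_diff_self g_def C_def)
  qed
  define d\<^sub>1 where "d\<^sub>1 = f q\<^sub>1 - f q\<^sub>2"
  define d\<^sub>2 where "d\<^sub>2 = f q\<^sub>1 - f q\<^sub>3"
  have orth: "\<forall>x\<in>X ` C. \<forall>d\<in>{d\<^sub>1, d\<^sub>2}. dotR k x d = 0"
  proof -
    have "d\<^sub>1 = X q\<^sub>1 - X q\<^sub>2" "d\<^sub>2 = X q\<^sub>1 - X q\<^sub>3" by (simp_all add: d\<^sub>1_def d\<^sub>2_def X_def)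
    moreover have "p \<noteq> q\<^sub>1" "p \<noteq> q\<^sub>2" "p \<noteq> q\<^sub>3" if "p \<in> C" for p
      using that Q by (auto simp: C_def)
    ultimately show ?thesis using gram QV by (auto simp: dotR_diff_right)
  qed
  have in_R_C: "\<forall>x\<in>X ` C. in_R k x" and in_R_d: "\<forall>d\<in>{d\<^sub>1, d\<^sub>2}. in_R k d"
    using in_R_X in_R_f QV by (auto simp: C_def d\<^sub>1_def d\<^sub>2_def in_R_diff)
  have finC: "finite C" using finV by (simp add: C_def)
  moreover have injX: "inj_on X C"
    using inj by (auto simp: inj_on_def X_def C_def)
  moreover have "\<forall>p\<in>C. in_R k (X p)"
    using in_R_X by (simp add: C_def)
  moreover have "\<forall>p\<in>C. \<forall>q\<in>C. dotR k (X p) (X q) = (if p = q then r\<^sup>2 else g)"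
    using gram by (simp add: C_def)
  moreover have "r\<^sup>2 \<noteq> g" by (simp add: g_def)
  moreover have "\<forall>p\<in>C. dotR k (X p) (X q\<^sub>1) = g"
    using gram QV Q by (auto simp: C_def)
  ultimately have indep_C: "\<not> fvec.dependent (X ` C)"
    by (rule equiangular_independent)
  have f_distinct: "f q\<^sub>1 \<noteq> f q\<^sub>2" "f q\<^sub>1 \<noteq> f q\<^sub>3" "f q\<^sub>2 \<noteq> f q\<^sub>3"
    using Q by (simp_all add: inj_on_eq_iff[OF inj] QV)
  have indep_d: "\<not> fvec.dependent {d\<^sub>1, d\<^sub>2}"
    unfolding d\<^sub>1_def d\<^sub>2_def
    by (rule not_dependent_chords[OF _ _ _ on_sphere on_sphere on_sphere f_distinct])
      (use in_R_f QV in blast)+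
  have indep: "\<not> fvec.dependent (X ` C \<union> {d\<^sub>1, d\<^sub>2})"
    by (rule independent_orthogonal_Un[OF indep_C indep_d in_R_C in_R_d orth])
  have "d\<^sub>1 \<noteq> d\<^sub>2"
  proof
    assume "d\<^sub>1 = d\<^sub>2"
    then have "f q\<^sub>2 i = f q\<^sub>3 i" for i
      using fun_cong[of d\<^sub>1 d\<^sub>2 i] by (simp add: d\<^sub>1_def d\<^sub>2_def)
    then show False using f_distinct(3) by blast
  qed
  then have "card (X ` C \<union> {d\<^sub>1, d\<^sub>2}) = card C + 2"
    using orthogonal_independent_disjoint[OF indep_C in_R_C orth] finC injX
    by (simp add: card_Un_disjoint card_image)
  moreover have "card (X ` C \<union> {d\<^sub>1, d\<^sub>2}) \<le> k"
    using card_le_of_independent_in_R(2)[OF indep] in_R_C in_R_d by blast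
  moreover have "card C + 3 = card V"
    using cov finV finite_subset[of Q V] card_mono[OF finV, of Q]
    by (simp add: C_def covers_nonedges_def card_Diff_subset)
  ultimately show ?thesis by linarith
qed

lemma sdim_ge_of_covers_nonedges:
  assumes "simple_graph V E" "covers_nonedges V E Q"
  shows "card V - 1 \<le> sdim V E"
proof -
  obtain r where "spherical_embedding V E (sdim V E) r"
    using sdim_attained[OF assms(1)] by blast
  then show ?thesis by (rule card_le_dim_of_covers_nonedges[OF assms])
qed

lemma sdim_le_of_eps3_part:
  assumes sg: "simple_graph V E" and eps3: "eps3_part V E Q"
  shows "sdim V E \<le> card V - 1"
proof -
  obtain q\<^sub>1 q\<^sub>2 q\<^sub>3 where "Q = {q\<^sub>1, q\<^sub>2, q\<^sub>3}" "q\<^sub>1 \<noteq> q\<^sub>2"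
    using eps3 card_3_iff unfolding eps3_part_def covers_nonedges_def by metis
  then have "nonadjacent V E q\<^sub>1 q\<^sub>2"
    using eps3 by (auto simp: eps3_part_def covers_nonedges_def nonadjacent_def)
  moreover have "{..<1::nat} = {0}" by auto
  ultimately show ?thesis
    using sdim_le_nonadjacent_matching[OF sg, where a = "\<lambda>_. q\<^sub>1" and b = "\<lambda>_. q\<^sub>2" and t = 1]
    by (simp add: nonadjacent_def)
qed

definition strictly_smaller :: "'a set \<times> 'a set set \<Rightarrow> 'a set \<times> 'a set set \<Rightarrow> bool" where
  "strictly_smaller H G \<longleftrightarrow> card (fst H) < card (fst G) \<or> (fst H = fst G \<and> snd H \<subset> snd G)"

lemma simple_graph_subgraph:
  assumes "simple_graph V E" "V' \<subseteq> V" "\<forall>e\<in>E'. \<exists>x y. e = {x, y} \<and> x \<noteq> y \<and> x \<in> V' \<and> y \<in> V'"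
  shows "simple_graph V' E'"
  using assms finite_subset by (auto simp: simple_graph_def)

lemma minor_step_simple_smaller:
  assumes "minor_step G H" "simple_graph (fst G) (snd G)"
  shows "simple_graph (fst H) (snd H) \<and> strictly_smaller H G"
  using assms
proof (induction rule: minor_step.induct)
  case (del_v v G)
  have "finite (fst G)" using del_v.prems by (simp add: simple_graph_def)
  then have "card (fst G - {v}) < card (fst G)" by (rule card_Diff1_less[OF _ del_v.hyps])
  moreover have "simple_graph (fst G - {v}) {e \<in> snd G. v \<notin> e}"
    by (rule simple_graph_subgraph[OF del_v.prems])
      (use del_v.prems in \<open>fastforce simp: simple_graph_def\<close>)+
  ultimately show ?case by (simp add: strictly_smaller_def delete_vertex_def)
next
  case (del_e e G)
  have "simple_graph (fst G) (snd G - {e})"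
    by (rule simple_graph_subgraph[OF del_e.prems]) (use del_e.prems in \<open>auto simp: simple_graph_def\<close>)
  then show ?case using del_e.hyps by (auto simp: strictly_smaller_def delete_edge_def)
next
  case (contr u v G)
  have "finite (fst G)" using contr.prems by (simp add: simple_graph_def)
  have uv: "u \<in> fst G" "v \<in> fst G"
    using simple_graph_edgeD[OF contr.prems contr.hyps(1)] by auto
  have "card (fst G - {v}) < card (fst G)" by (rule card_Diff1_less[OF \<open>finite (fst G)\<close> uv(2)])
  moreover have "\<exists>x y. e = {x, y} \<and> x \<noteq> y \<and> x \<in> fst G - {v} \<and> y \<in> fst G - {v}"
    if e: "e \<in> {e \<in> snd G. v \<notin> e} \<union> {{u, w} | w. {v, w} \<in> snd G \<and> w \<noteq> u}" for e
  proof (cases "e \<in> snd G \<and> v \<notin> e")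
    case True
    then show ?thesis using contr.prems by (fastforce simp: simple_graph_def)
  next
    case False
    then obtain w where w: "e = {u, w}" "{v, w} \<in> snd G" "w \<noteq> u" using e by blast
    then show ?thesis using simple_graph_edgeD[OF contr.prems w(2)] uv contr.hyps(2) by blast
  qed
  then have "simple_graph (fst G - {v}) ({e \<in> snd G. v \<notin> e} \<union> {{u, w} | w. {v, w} \<in> snd G \<and> w \<noteq> u})"
    by (intro simple_graph_subgraph[OF contr.prems]) auto
  ultimately show ?case by (simp add: strictly_smaller_def contract_edge_def)
qed

lemma proper_minor_simple_smaller:
  assumes "proper_minor H G" "simple_graph (fst G) (snd G)"
  shows "simple_graph (fst H) (snd H) \<and> strictly_smaller H G"
proof -
  have "minor_step\<^sup>+\<^sup>+ G H" using assms(1) by (simp add: proper_minor_def)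
  then show ?thesis
  proof (induction rule: tranclp_induct)
    case (base H)
    then show ?case by (rule minor_step_simple_smaller[OF _ assms(2)])
  next
    case (step H H')
    then show ?case
      using minor_step_simple_smaller[OF step.hyps(2)] by (auto simp: strictly_smaller_def)
  qed
qed

lemma proper_minor_of_edge_subset:
  assumes "finite E" "E' \<subset> E"
  shows "proper_minor (V, E') (V, E)"
proof -
  have "minor_step\<^sup>+\<^sup>+ (V, E) (V, E - D)" if "finite D" "D \<noteq> {}" "D \<subseteq> E" for D
    using that
  proof (induction D rule: finite_ne_induct)
    case (singleton e)
    then show ?case using minor_step.del_e[of e "(V, E)"] by (simp add: delete_edge_def)
  next
    case (insert e D)
    then have "minor_step (V, E - D) (delete_edge e (V, E - D))"
      by (intro minor_step.del_e) auto
    moreover have "delete_edge e (V, E - D) = (V, E - insert e D)"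
      by (auto simp: delete_edge_def)
    ultimately show ?case
      using insert by (auto intro: tranclp.trancl_into_trancl)
  qed
  from this[of "E - E'"] show ?thesis
    using assms by (simp add: proper_minor_def Diff_Diff_Int inf.absorb2 finite_subset less_imp_le)
qed

lemma simple_graph_finite_edges:
  assumes "simple_graph V E"
  shows "finite E"
proof -
  have "E \<subseteq> Pow V" using assms by (auto simp: simple_graph_def)
  then show ?thesis using assms finite_subset by (auto simp: simple_graph_def)
qed

lemma covers_nonedges_of_small_set:
  assumes fin: "finite V" and "3 \<le> card V" "N \<subseteq> V" "card N \<le> 3"
    and "\<forall>u v. nonadjacent V E u v \<longrightarrow> u \<in> N \<and> v \<in> N"
  shows "\<exists>Q. covers_nonedges V E Q"
proof -
  have finN: "finite N" using fin assms(3) by (rule finite_subset[rotated])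
  have "card (V - N) = card V - card N" by (rule card_Diff_subset[OF finN assms(3)])
  then have "3 - card N \<le> card (V - N)" using assms(2) by linarith
  then obtain T where T: "T \<subseteq> V - N" "card T = 3 - card N" "finite T"
    using obtain_subset_with_card_n by blast
  have "card (N \<union> T) = card N + card T"
    using T finN by (intro card_Un_disjoint) auto
  then have "covers_nonedges V E (N \<union> T)"
    using assms T by (auto simp: covers_nonedges_def)
  then show ?thesis by blast
qed

lemma nonadjacent_within_star:
  assumes fin: "finite V" and "x \<in> V" and star: "\<forall>u v. nonadjacent V E u v \<longrightarrow> u = x \<or> v = x"
    and three: "\<And>y z w. nonadjacent V E x y \<Longrightarrow> nonadjacent V E x z \<Longrightarrow> nonadjacent V E x w
      \<Longrightarrow> y = z \<or> y = w \<or> z = w"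
  shows "\<exists>N \<subseteq> V. card N \<le> 3 \<and> (\<forall>u v. nonadjacent V E u v \<longrightarrow> u \<in> N \<and> v \<in> N)"
proof -
  define M where "M = {v. nonadjacent V E x v}"
  have "card M \<le> 2"
  proof (rule ccontr)
    assume "\<not> card M \<le> 2"
    then obtain T where "T \<subseteq> M" "card T = 3" using obtain_subset_with_card_n[of 3 M] by auto
    then obtain y z w where "T = {y, z, w}" "y \<noteq> z" "y \<noteq> w" "z \<noteq> w" using card_3_iff by metis
    then show False using \<open>T \<subseteq> M\<close> three[of y z w] by (auto simp: M_def)
  qed
  moreover have "finite M"
    using fin by (rule finite_subset[rotated]) (auto simp: M_def nonadjacent_def)
  ultimately have "card (insert x M) \<le> 3" by (simp add: card_insert_if)
  moreover have "insert x M \<subseteq> V" using \<open>x \<in> V\<close> by (auto simp: M_def nonadjacent_def)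
  moreover have "u \<in> insert x M \<and> v \<in> insert x M" if "nonadjacent V E u v" for u v
    using star that nonadjacent_sym[OF that] by (auto simp: M_def)
  ultimately show ?thesis by blast
qed

lemma nonadjacent_within_triangle:
  assumes ab: "nonadjacent V E a b" and no_star: "\<forall>x. \<exists>u v. nonadjacent V E u v \<and> u \<noteq> x \<and> v \<noteq> x"
    and disjoint: "\<And>a b c d. nonadjacent V E a b \<Longrightarrow> nonadjacent V E c d \<Longrightarrow> {a, b} \<inter> {c, d} \<noteq> {}"
  shows "\<exists>N \<subseteq> V. card N \<le> 3 \<and> (\<forall>u v. nonadjacent V E u v \<longrightarrow> u \<in> N \<and> v \<in> N)"
proof -
  have meet: "u = x \<or> u = y \<or> v = x \<or> v = y"
    if "nonadjacent V E u v" "nonadjacent V E x y" for u v x y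
    using disjoint[OF that] by blast
  have meets: "\<exists>w. nonadjacent V E x w \<and> w \<noteq> y" if "nonadjacent V E x y" for x y
  proof -
    obtain u v where uv: "nonadjacent V E u v" "u \<noteq> y" "v \<noteq> y" using no_star by blast
    then have "u = x \<or> v = x" using meet[OF uv(1) that] by blast
    then show ?thesis using uv nonadjacent_sym[OF uv(1)] by auto
  qed
  obtain c where c: "nonadjacent V E b c" "c \<noteq> a"
    using meets[OF nonadjacent_sym[OF ab]] by blast
  obtain d where d: "nonadjacent V E a d" "d \<noteq> b"
    using meets[OF ab] by blast
  have "a \<noteq> b" "b \<noteq> c" "a \<noteq> d" using ab c(1) d(1) by (auto simp: nonadjacent_def)
  then have "c = d" using meet[OF c(1) d(1)] c(2) d(2) by blast
  then have ac: "nonadjacent V E a c" using d(1) by simp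
  have "u \<in> {a, b, c} \<and> v \<in> {a, b, c}" if "nonadjacent V E u v" for u v
    using meet[OF that ab] meet[OF that c(1)] meet[OF that ac] \<open>a \<noteq> b\<close> \<open>b \<noteq> c\<close> c(2)
    by blast
  moreover have "{a, b, c} \<subseteq> V" using ab c(1) by (auto simp: nonadjacent_def)
  moreover have "card {a, b, c} \<le> 3" by (simp add: card_insert_if)
  ultimately show ?thesis by blast
qed

lemma covers_nonedges_exists:
  assumes sg: "simple_graph V E" and "3 \<le> card V"
    and disjoint: "\<And>a b c d. nonadjacent V E a b \<Longrightarrow> nonadjacent V E c d \<Longrightarrow> {a, b} \<inter> {c, d} \<noteq> {}"
    and three: "\<And>s x y z. nonadjacent V E s x \<Longrightarrow> nonadjacent V E s y \<Longrightarrow> nonadjacent V E s z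
      \<Longrightarrow> x = y \<or> x = z \<or> y = z"
  shows "\<exists>Q. covers_nonedges V E Q"
proof -
  have fin: "finite V" using sg by (simp add: simple_graph_def)
  have "\<exists>N \<subseteq> V. card N \<le> 3 \<and> (\<forall>u v. nonadjacent V E u v \<longrightarrow> u \<in> N \<and> v \<in> N)"
  proof (cases "\<exists>a b. nonadjacent V E a b")
    case False
    then show ?thesis by (intro exI[of _ "{}"]) auto
  next
    case True
    then obtain a b where ab: "nonadjacent V E a b" by blast
    show ?thesis
    proof (cases "\<exists>x. \<forall>u v. nonadjacent V E u v \<longrightarrow> u = x \<or> v = x")
      case True
      then obtain x where x: "\<forall>u v. nonadjacent V E u v \<longrightarrow> u = x \<or> v = x" by blast
      then have "x \<in> V" using ab by (auto simp: nonadjacent_def)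
      then show ?thesis by (rule nonadjacent_within_star[OF fin _ x three])
    next
      case False
      then have "\<forall>x. \<exists>u v. nonadjacent V E u v \<and> u \<noteq> x \<and> v \<noteq> x" by auto
      then show ?thesis by (rule nonadjacent_within_triangle[OF ab _ disjoint])
    qed
  qed
  then obtain N where "N \<subseteq> V" "card N \<le> 3" "\<forall>u v. nonadjacent V E u v \<longrightarrow> u \<in> N \<and> v \<in> N"
    by blast
  then show ?thesis by (rule covers_nonedges_of_small_set[OF fin assms(2)])
qed

lemma K_plus_eps3_E_iff:
  "{i, j} \<in> K_plus_eps3_E n \<longleftrightarrow> i < n \<and> j < n \<and> i \<noteq> j \<and> (i < n - 3 \<or> j < n - 3)"
  unfolding K_plus_eps3_E_def by (auto simp: doubleton_eq_iff)

lemma eps3_part_of_graph_iso: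
  assumes sg: "simple_graph V E" and "3 \<le> n"
    and "graph_iso V E (K_plus_eps3_V n) (K_plus_eps3_E n)"
  shows "\<exists>Q. eps3_part V E Q"
proof -
  obtain \<phi> where bij: "bij_betw \<phi> V {0..<n}"
    and iso: "\<forall>u\<in>V. \<forall>v\<in>V. {u, v} \<in> E \<longleftrightarrow> {\<phi> u, \<phi> v} \<in> K_plus_eps3_E n"
    using assms(3) unfolding graph_iso_def K_plus_eps3_V_def by blast
  define Q where "Q = {v \<in> V. n - 3 \<le> \<phi> v}"
  have "\<phi> ` Q = {n - 3..<n}"
  proof
    show "\<phi> ` Q \<subseteq> {n - 3..<n}" using bij by (auto simp: Q_def bij_betw_def)
    show "{n - 3..<n} \<subseteq> \<phi> ` Q"
    proof
      fix i assume i: "i \<in> {n - 3..<n}"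
      then have "i \<in> \<phi> ` V" using bij by (auto simp: bij_betw_def)
      then show "i \<in> \<phi> ` Q" using i by (auto simp: Q_def)
    qed
  qed
  moreover have "inj_on \<phi> Q"
    using bij by (auto simp: Q_def bij_betw_def intro: inj_on_subset)
  ultimately have "card Q = 3"
    using card_image[of \<phi> Q] assms(2) by simp
  moreover have "u \<in> Q \<and> v \<in> Q" if "nonadjacent V E u v" for u v
  proof -
    have "\<phi> u \<noteq> \<phi> v" "\<phi> u < n" "\<phi> v < n"
      using that bij by (auto simp: nonadjacent_def bij_betw_def inj_on_def)
    then show ?thesis
      using that iso by (auto simp: nonadjacent_def K_plus_eps3_E_iff Q_def)
  qed
  moreover have "{u, v} \<notin> E" if "u \<in> Q" "v \<in> Q" for u v
    using that iso by (auto simp: Q_def K_plus_eps3_E_iff)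
  ultimately have "eps3_part V E Q"
    by (auto simp: eps3_part_def covers_nonedges_def Q_def)
  then show ?thesis by blast
qed

lemma graph_iso_of_eps3_part:
  assumes sg: "simple_graph V E" and "card V = n" and eps3: "eps3_part V E Q"
  shows "graph_iso V E (K_plus_eps3_V n) (K_plus_eps3_E n)"
proof -
  have QV: "Q \<subseteq> V" and "card Q = 3" and finV: "finite V"
    and cov: "\<forall>u v. nonadjacent V E u v \<longrightarrow> u \<in> Q \<and> v \<in> Q"
    and indep: "\<forall>u\<in>Q. \<forall>v\<in>Q. {u, v} \<notin> E"
    using eps3 sg by (auto simp: eps3_part_def covers_nonedges_def simple_graph_def)
  then have "card (V - Q) = n - 3" "3 \<le> n"
    using assms(2) finite_subset[OF QV finV] card_mono[OF finV QV] by (auto simp: card_Diff_subset)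
  then obtain h\<^sub>1 h\<^sub>2 where h\<^sub>1: "bij_betw h\<^sub>1 (V - Q) {0..<n - 3}" and h\<^sub>2: "bij_betw h\<^sub>2 Q {n - 3..<n}"
    using finite_same_card_bij[of "V - Q" "{0..<n - 3}"] finite_same_card_bij[of Q "{n - 3..<n}"]
      finV finite_subset[OF QV finV] \<open>card Q = 3\<close> by auto
  define \<phi> where "\<phi> v = (if v \<in> Q then h\<^sub>2 v else h\<^sub>1 v)" for v
  have "bij_betw \<phi> (V - Q) {0..<n - 3} \<longleftrightarrow> bij_betw h\<^sub>1 (V - Q) {0..<n - 3}"
    by (rule bij_betw_cong) (simp add: \<phi>_def)
  moreover have "bij_betw \<phi> Q {n - 3..<n} \<longleftrightarrow> bij_betw h\<^sub>2 Q {n - 3..<n}"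
    by (rule bij_betw_cong) (simp add: \<phi>_def)
  ultimately have "bij_betw \<phi> ((V - Q) \<union> Q) ({0..<n - 3} \<union> {n - 3..<n})"
    using h\<^sub>1 h\<^sub>2 by (intro bij_betw_combine) auto
  moreover have "(V - Q) \<union> Q = V" "{0..<n - 3} \<union> {n - 3..<n} = {0..<n}"
    using QV by auto
  ultimately have bij: "bij_betw \<phi> V {0..<n}" by simp
  have low: "\<phi> v < n - 3 \<longleftrightarrow> v \<notin> Q" if "v \<in> V" for v
  proof (cases "v \<in> Q")
    case True
    then have "h\<^sub>2 v \<in> {n - 3..<n}" using h\<^sub>2 by (auto simp: bij_betw_def)
    then show ?thesis using True by (simp add: \<phi>_def)
  next
    case False
    then have "h\<^sub>1 v \<in> {0..<n - 3}" using h\<^sub>1 that by (auto simp: bij_betw_def)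
    then show ?thesis using False by (simp add: \<phi>_def)
  qed
  have "{u, v} \<in> E \<longleftrightarrow> {\<phi> u, \<phi> v} \<in> K_plus_eps3_E n" if "u \<in> V" "v \<in> V" for u v
  proof (cases "u = v")
    case True
    then show ?thesis
      using simple_graph_edgeD(3)[OF sg, of v v] K_plus_eps3_E_iff[of "\<phi> v" "\<phi> v" n] by auto
  next
    case False
    have "{u, v} \<in> E \<longleftrightarrow> \<not> (u \<in> Q \<and> v \<in> Q)"
      using indep cov[rule_format, of u v] False that by (auto simp: nonadjacent_def)
    moreover have "\<phi> u \<noteq> \<phi> v" "\<phi> u < n" "\<phi> v < n"
      using False that bij by (auto simp: bij_betw_def inj_on_def)
    ultimately show ?thesis
      using low[OF that(1)] low[OF that(2)] by (simp add: K_plus_eps3_E_iff)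
  qed
  with bij show ?thesis
    unfolding graph_iso_def K_plus_eps3_V_def by blast
qed

lemma sdim_le_of_deleted_edge:
  assumes sg': "simple_graph V E'" and eps3: "eps3_part V E Q" and "E' \<subseteq> E"
    and uv: "nonadjacent V E' u v" "{u, v} \<in> E"
  shows "sdim V E' \<le> card V - 2"
proof -
  have QV: "Q \<subseteq> V" and "card Q = 3" and indep: "\<forall>x\<in>Q. \<forall>y\<in>Q. {x, y} \<notin> E"
    using eps3 by (auto simp: eps3_part_def covers_nonedges_def)
  have nonadj_Q: "nonadjacent V E' x y" if "x \<in> Q" "y \<in> Q" "x \<noteq> y" for x y
    using that QV indep \<open>E' \<subseteq> E\<close> by (auto simp: nonadjacent_def)
  have star: "sdim V E' \<le> card V - 2" if "nonadjacent V E' s w" "s \<in> Q" "w \<notin> Q" for s w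
  proof -
    have "card (Q - {s}) = 2" using \<open>card Q = 3\<close> \<open>s \<in> Q\<close> by simp
    then obtain y z where "Q - {s} = {y, z}" "y \<noteq> z" by (meson card_2_iff)
    then have "y \<in> Q" "z \<in> Q" "y \<noteq> s" "z \<noteq> s" "w \<noteq> y" "w \<noteq> z" using \<open>w \<notin> Q\<close> by auto
    then show ?thesis
      using sdim_le_three_nonneighbours[OF sg' that(1) nonadj_Q[of s y] nonadj_Q[of s z]]
        \<open>s \<in> Q\<close> \<open>y \<noteq> z\<close> by auto
  qed
  have "\<not> (u \<in> Q \<and> v \<in> Q)" using indep uv(2) by blast
  then consider "u \<notin> Q" "v \<notin> Q" | "u \<in> Q" "v \<notin> Q" | "v \<in> Q" "u \<notin> Q" by blast
  then show ?thesis
  proof cases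
    case 1
    obtain q\<^sub>1 q\<^sub>2 q\<^sub>3 where "Q = {q\<^sub>1, q\<^sub>2, q\<^sub>3}" "q\<^sub>1 \<noteq> q\<^sub>2"
      using \<open>card Q = 3\<close> card_3_iff by metis
    then show ?thesis
      using sdim_le_two_disjoint_nonadjacent[OF sg' uv(1) nonadj_Q[of q\<^sub>1 q\<^sub>2]] 1 by auto
  next
    case 2
    then show ?thesis using star uv(1) by blast
  next
    case 3
    then show ?thesis using star nonadjacent_sym[OF uv(1)] by blast
  qed
qed

lemma eps3_part_minor_minimal:
  assumes sg: "simple_graph V E" and "card V = n" "3 < n" and eps3: "eps3_part V E Q"
  shows "minor_minimal_sdim V E (n - 1)"
  unfolding minor_minimal_sdim_def
proof (intro conjI allI impI)
  show "sdim V E = n - 1"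
    using sdim_le_of_eps3_part[OF sg eps3] sdim_ge_of_covers_nonedges[OF sg] eps3 assms(2)
    by (force simp: eps3_part_def)
next
  fix V' E' assume "proper_minor (V', E') (V, E)"
  then have sg': "simple_graph V' E'" and "card V' < n \<or> (V' = V \<and> E' \<subset> E)"
    using proper_minor_simple_smaller[of "(V', E')" "(V, E)"] sg assms(2)
    by (auto simp: strictly_smaller_def)
  then consider "card V' \<le> (n - 2) + 1" | "V' = V" "E' \<subset> E" by linarith
  then show "sdim V' E' < n - 1"
  proof cases
    case 1
    then show ?thesis using sdim_le_of_card_le_Suc[OF sg' 1] assms(3) by linarith
  next
    case 2
    then obtain e where "e \<in> E" "e \<notin> E'" by blast
    then obtain u v where "e = {u, v}" "nonadjacent V E' u v"
      using sg by (auto simp: simple_graph_def nonadjacent_def)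
    then show ?thesis
      using sdim_le_of_deleted_edge[of V E' E Q u v] sg' eps3 2 \<open>e \<in> E\<close> assms(2,3) by auto
  qed
qed

lemma covers_nonedges_delete_inside:
  assumes "covers_nonedges V E Q"
  shows "covers_nonedges V {e \<in> E. \<not> e \<subseteq> Q} Q"
  using assms unfolding covers_nonedges_def nonadjacent_def by blast

lemma minor_minimal_eps3_part:
  assumes sg: "simple_graph V E" and "card V = n" "3 < n"
    and min: "minor_minimal_sdim V E (n - 1)"
  shows "\<exists>Q. eps3_part V E Q"
proof -
  have sd: "sdim V E = n - 1"
    and proper: "\<And>V' E'. proper_minor (V', E') (V, E) \<Longrightarrow> sdim V' E' < n - 1"
    using min by (auto simp: minor_minimal_sdim_def)
  have "\<exists>Q. covers_nonedges V E Q"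
  proof (rule covers_nonedges_exists[OF sg])
    show "3 \<le> card V" using assms(2,3) by simp
    show "{a, b} \<inter> {c, d} \<noteq> {}" if "nonadjacent V E a b" "nonadjacent V E c d" for a b c d
    proof
      assume "{a, b} \<inter> {c, d} = {}"
      then have "sdim V E \<le> card V - 2" by (rule sdim_le_two_disjoint_nonadjacent[OF sg that])
      then show False using sd assms(2,3) by linarith
    qed
    show "x = y \<or> x = z \<or> y = z"
      if "nonadjacent V E s x" "nonadjacent V E s y" "nonadjacent V E s z" for s x y z
    proof (rule ccontr)
      assume "\<not> (x = y \<or> x = z \<or> y = z)"
      then have "sdim V E \<le> card V - 2" using sdim_le_three_nonneighbours[OF sg that] by blast
      then show False using sd assms(2,3) by linarith
    qed
  qed
  then obtain Q where cov: "covers_nonedges V E Q" by blast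
  have "{x, y} \<notin> E" if "x \<in> Q" "y \<in> Q" for x y
  proof
    assume "{x, y} \<in> E"
    define E' where "E' = {e \<in> E. \<not> e \<subseteq> Q}"
    have "{x, y} \<notin> E'" using that by (simp add: E'_def)
    then have "E' \<subset> E" using \<open>{x, y} \<in> E\<close> unfolding E'_def by blast
    then have "proper_minor (V, E') (V, E)"
      by (rule proper_minor_of_edge_subset[OF simple_graph_finite_edges[OF sg]])
    then have "sdim V E' < n - 1" by (rule proper)
    moreover have "simple_graph V E'"
      using sg unfolding simple_graph_def E'_def by blast
    moreover have "covers_nonedges V E' Q"
      unfolding E'_def by (rule covers_nonedges_delete_inside[OF cov])
    ultimately show False
      using sdim_ge_of_covers_nonedges[of V E' Q] assms(2) by linarith
  qed
  then have "eps3_part V E Q" using cov by (simp add: eps3_part_def)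
  then show ?thesis ..
qed

theorem mainTheorem18:
  fixes V :: "'a set" and E :: "'a set set" and n :: nat
  assumes "n > 3" and "simple_graph V E" and "card V = n"
  shows "minor_minimal_sdim V E (n - 1) \<longleftrightarrow>
         graph_iso V E (K_plus_eps3_V n) (K_plus_eps3_E n)"
proof -
  have "graph_iso V E (K_plus_eps3_V n) (K_plus_eps3_E n) \<longleftrightarrow> (\<exists>Q. eps3_part V E Q)"
    using eps3_part_of_graph_iso[OF assms(2) less_imp_le[OF assms(1)]]
      graph_iso_of_eps3_part[OF assms(2,3)] by blast
  moreover have "minor_minimal_sdim V E (n - 1) \<longleftrightarrow> (\<exists>Q. eps3_part V E Q)"
    using minor_minimal_eps3_part[OF assms(2,3,1)] eps3_part_minor_minimal[OF assms(2,3,1)] by blast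
  ultimately show ?thesis by blast
qed

end
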